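(* In the quantized ARX setting described in the context, suppose Assumptions (A1)–(A5) hold, and let $0\le p\le p_0$. Write the least squares estimate $\theta_n(p,q^* )=[-a_{1n}(p),\dots,-a_{pn}(p),b_{1n}(p),\dots,b_{q^*n}(p)]^\top$, define $$\hat\theta_n(p)=[-a_{1n}(p),\dots,-a_{pn}(p),\underbrace{0,\dots,0}_{p_0-p},b_{1n}(p),\dots,b_{q^*n}(p)]^\top$$ and $\tilde\theta_n(p)=\bar\theta(p_0,q^* )-\hat\theta_n(p)$. Then there is a constant $\gamma$ such that, almost surely, $\|\tilde\theta_n(p)\|\le\gamma$ for all sufficiently large $n$.
   Context: System: $y_{n+1}=-a_1y_n-\dots-a_{p_0}y_{n-p_0+1}+b_1u_n+\dots+b_{q_0}u_{n-q_0+1}+w_{n+1}$, $n\ge0$, i.e. $A(z)y_{n+1}=B(z)u_n+w_{n+1}$ with $A(z)=1+a_1z+\dots+a_{p_0}z^{p_0}$ ($p_0\ge0$), $B(z)=b_1+\dots+b_{q_0}z^{q_0-1}$ ($q_0\ge1$), $z$ the backward shift, $a_{p_0}\ne0$, $b_{q_0}\ne0$. Noise $\{w_n\}$ i.i.d. $N(0,1)$; $y_n=u_n=w_n=0$ for $n<0$. With quantization step $\varepsilon>0$, $s_n=\varepsilon\lfloor y_n/\varepsilon+1/2\rfloor$. For integers $p,q\ge0$, $\psi_i(p,q)=[s_i,\dots,s_{i-p+1},u_i,\dots,u_{i-q+1}]^\top$ with $s_i=u_i=0$ when $i\le0$; $P_{n}(p,q)=(I+\sum_{i=0}^{n-1}\psi_i(p,q)\psi_i(p,q)^\top)^{-1}$;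 $\lambda^{(p,q)}_{min}(n)$ is the smallest eigenvalue of $P_{n+1}^{-1}(p,q)$. Least squares estimate $\theta_n(p,q)=P_n(p,q)\sum_{i=0}^{n-1}\psi_i(p,q)s_{i+1}$. $\bar\theta(p,q)=[-a_1,\dots,-a_p,b_1,\dots,b_q]^\top$ with $a_i=0$ for $i>p_0$, $b_j=0$ for $j>q_0$. Assumptions: (A1) $\{u_i\}$ i.i.d., uniform on $[-\delta,\delta]$, $\delta>0$. (A2) $A(z)\ne0$ for all $|z|\le1$. (A3) There is $c>0$ with $|a_i|\le c$, $|b_j|\le c$ for all $i,j$, and $\varepsilon<\frac{1}{2(1+p_0c)}$. (A4) $(p_0,q_0)\in\{(p,q):0\le p\le p^*,1\le q\le q^*\}$ for known integers $p^*,q^*>0$. (A5) There is $c_1>0$ such that for all $0\le p\le p^*$, almost surely $\lambda^{(p,q^* )}_{min}(n)\ge c_1(n+1)$ for all sufficiently large $n$. *)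

theory Defs
  imports "HOL-Probability.Probability" "Jordan_Normal_Form.Gauss_Jordan_Elimination"
    "Jordan_Normal_Form.Char_Poly"
begin

definition quant :: "real \<Rightarrow> real \<Rightarrow> real" where
  "quant eps y = eps * real_of_int \<lfloor>y / eps + 1/2\<rfloor>"

(* regressor psi_i(p,q) = [s_i,...,s_{i-p+1}, u_i,...,u_{i-q+1}], entries with index <= 0 are 0 *)
definition regr :: "(nat \<Rightarrow> real) \<Rightarrow> (nat \<Rightarrow> real) \<Rightarrow> nat \<Rightarrow> nat \<Rightarrow> nat \<Rightarrow> real vec" where
  "regr s u p q i = vec (p + q) (\<lambda>k. if k < p then (if k < i then s (i - k) else 0)
                                    else (if k - p < i then u (i - (k - p)) else 0))"

definition Pinv :: "(nat \<Rightarrow> real) \<Rightarrow> (nat \<Rightarrow> real) \<Rightarrow> nat \<Rightarrow> nat \<Rightarrow> nat \<Rightarrow> real mat" where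
  "Pinv s u p q n = mat (p + q) (p + q)
     (\<lambda>(j, k). (if j = k then 1 else 0) + (\<Sum>i<n. regr s u p q i $ j * regr s u p q i $ k))"

definition Pmat :: "(nat \<Rightarrow> real) \<Rightarrow> (nat \<Rightarrow> real) \<Rightarrow> nat \<Rightarrow> nat \<Rightarrow> nat \<Rightarrow> real mat" where
  "Pmat s u p q n = the (mat_inverse (Pinv s u p q n))"

definition lambda_min :: "(nat \<Rightarrow> real) \<Rightarrow> (nat \<Rightarrow> real) \<Rightarrow> nat \<Rightarrow> nat \<Rightarrow> nat \<Rightarrow> real" where
  "lambda_min s u p q n = Min {k. eigenvalue (Pinv s u p q (Suc n)) k}"

definition theta_LS :: "(nat \<Rightarrow> real) \<Rightarrow> (nat \<Rightarrow> real) \<Rightarrow> nat \<Rightarrow> nat \<Rightarrow> nat \<Rightarrow> real vec" where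
  "theta_LS s u p q n = Pmat s u p q n *\<^sub>v
     vec (p + q) (\<lambda>j. \<Sum>i<n. regr s u p q i $ j * s (Suc i))"

definition theta_bar :: "(nat \<Rightarrow> real) \<Rightarrow> (nat \<Rightarrow> real) \<Rightarrow> nat \<Rightarrow> nat \<Rightarrow> real vec" where
  "theta_bar a b p q = vec (p + q) (\<lambda>k. if k < p then - a (Suc k) else b (Suc (k - p)))"

definition theta_hat :: "(nat \<Rightarrow> real) \<Rightarrow> (nat \<Rightarrow> real) \<Rightarrow> nat \<Rightarrow> nat \<Rightarrow> nat \<Rightarrow> nat \<Rightarrow> real vec" where
  "theta_hat s u p0 p q n = vec (p0 + q) (\<lambda>k. if k < p then theta_LS s u p q n $ k
                                          else if k < p0 then 0
                                          else theta_LS s u p q n $ (k - p0 + p))"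

definition enorm :: "real vec \<Rightarrow> real" where
  "enorm v = sqrt (\<Sum>k<dim_vec v. (v $ k)\<^sup>2)"

end

(* Since A(z) has no zeros in the closed unit disc, 1/A(z) has absolutely summable
   coefficients, so the system has bounded l2-gain: sum_{n<N} y_n^2 <= K (N + sum_{n<N} w_n^2)
   for bounded inputs.  A Chernoff bound (E exp(w^2/4) = sqrt 2 < e) and Borel-Cantelli give
   sum_{n<N} w_n^2 < 4N eventually, almost surely, and quantization moves each y_n by at most
   eps/2; hence sum_{i<n} s_{i+1}^2 = O(n).  On the other hand the least-squares estimate
   satisfies theta_n' P_n^{-1} theta_n <= sum_{i<n} s_{i+1}^2 by Cauchy-Schwarz, while the left
   side is at least lambda_min |theta_n|^2 >= c1 n |theta_n|^2 by (A5).  So theta_n, and with it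
   the padded estimation error, stays bounded. *)

theory Submission
  imports Defs "HOL-Complex_Analysis.Laurent_Convergence"
begin

section \<open>Quadratic forms and the smallest eigenvalue\<close>

lemma square_add_le: "((x :: real) + y)\<^sup>2 \<le> 2 * x\<^sup>2 + 2 * y\<^sup>2"
  using sum_squares_bound[of x y] by (simp add: power2_sum)

lemma scalar_prod_eq_sum:
  "y \<in> carrier_vec n \<Longrightarrow> x \<bullet> y = (\<Sum>i<n. x $ i * y $ i)"
  unfolding scalar_prod_def by (simp add: atLeast0LessThan)

lemma scalar_prod_self_nonneg: "0 \<le> (x :: real vec) \<bullet> x"
  using conjugate_square_ge_0_vec[of x] by simp

lemma scalar_prod_self_eq_0_iff: "(x :: real vec) \<in> carrier_vec n \<Longrightarrow> x \<bullet> x = 0 \<longleftrightarrow> x = 0\<^sub>v n"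
  using conjugate_square_eq_0_vec[of x n] by simp

lemma square_index_le_scalar_prod_self:
  fixes x :: "real vec"
  assumes "x \<in> carrier_vec n" "i < n"
  shows "(x $ i)\<^sup>2 \<le> x \<bullet> x"
proof -
  have "(x $ i)\<^sup>2 = (\<Sum>k\<in>{i}. (x $ k)\<^sup>2)" by simp
  also have "\<dots> \<le> (\<Sum>k<n. (x $ k)\<^sup>2)" using assms by (intro sum_mono2) auto
  finally show ?thesis using assms by (simp add: scalar_prod_eq_sum power2_eq_square)
qed

lemma quadratic_form_eq_sum:
  assumes "A \<in> carrier_mat n n" "x \<in> carrier_vec n" "y \<in> carrier_vec n"
  shows "x \<bullet> (A *\<^sub>v y) = (\<Sum>i<n. \<Sum>j<n. x $ i * A $$ (i, j) * y $ j)"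
  using assms by (simp add: scalar_prod_eq_sum[of _ n] row_def sum_distrib_left mult.assoc)

lemma abs_quadratic_form_le:
  fixes A :: "real mat"
  assumes A: "A \<in> carrier_mat n n" and x: "x \<in> carrier_vec n"
  shows "\<bar>x \<bullet> (A *\<^sub>v x)\<bar> \<le> (\<Sum>i<n. \<Sum>j<n. \<bar>A $$ (i, j)\<bar>) * (x \<bullet> x)"
proof -
  have "\<bar>x \<bullet> (A *\<^sub>v x)\<bar> \<le> (\<Sum>i<n. \<Sum>j<n. \<bar>x $ i * A $$ (i, j) * x $ j\<bar>)"
    unfolding quadratic_form_eq_sum[OF A x x] by (rule order.trans[OF sum_abs sum_mono]) (rule sum_abs)
  also have "\<dots> \<le> (\<Sum>i<n. \<Sum>j<n. \<bar>A $$ (i, j)\<bar> * (x \<bullet> x))"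
  proof (intro sum_mono)
    fix i j assume "i \<in> {..<n}" "j \<in> {..<n}"
    then have "\<bar>x $ i * x $ j\<bar> \<le> x \<bullet> x"
      using sum_squares_bound[of "\<bar>x $ i\<bar>" "\<bar>x $ j\<bar>"]
        square_index_le_scalar_prod_self[OF x, of i] square_index_le_scalar_prod_self[OF x, of j]
      by (simp add: abs_mult)
    from mult_left_mono[OF this abs_ge_zero[of "A $$ (i, j)"]]
    show "\<bar>x $ i * A $$ (i, j) * x $ j\<bar> \<le> \<bar>A $$ (i, j)\<bar> * (x \<bullet> x)"
      by (simp add: abs_mult mult_ac)
  qed
  finally show ?thesis by (simp add: sum_distrib_right)
qed

lemma mult_mat_vec_scalar_prod_self_le:
  fixes A :: "real mat"
  assumes A: "A \<in> carrier_mat n n" and x: "x \<in> carrier_vec n"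
  shows "(A *\<^sub>v x) \<bullet> (A *\<^sub>v x) \<le> (\<Sum>i<n. \<Sum>j<n. (A $$ (i, j))\<^sup>2) * (x \<bullet> x)"
proof -
  have "(A *\<^sub>v x) \<bullet> (A *\<^sub>v x) = (\<Sum>i<n. (\<Sum>j<n. A $$ (i, j) * x $ j)\<^sup>2)"
    using A x by (simp add: scalar_prod_eq_sum[of _ n] row_def power2_eq_square)
  also have "\<dots> \<le> (\<Sum>i<n. (\<Sum>j<n. (A $$ (i, j))\<^sup>2) * (\<Sum>j<n. (x $ j)\<^sup>2))"
    by (intro sum_mono Cauchy_Schwarz_ineq_sum)
  finally show ?thesis using x by (simp add: scalar_prod_eq_sum[OF x] sum_distrib_right power2_eq_square)
qed

lemma quadratic_form_symmetric:
  assumes A: "A \<in> carrier_mat n n" and sym: "transpose_mat A = A"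
    and x: "x \<in> carrier_vec n" and y: "y \<in> carrier_vec n"
  shows "y \<bullet> (A *\<^sub>v x) = (x :: 'a :: comm_semiring_0 vec) \<bullet> (A *\<^sub>v y)"
  using transpose_vec_mult_scalar[OF A x y] comm_scalar_prod[of x n "A *\<^sub>v y"] A x y sym by simp

lemma discriminant_le_of_quadratic_nonneg:
  fixes \<alpha> \<beta> \<gamma> :: real
  assumes "\<gamma> \<ge> 0" and nonneg: "\<And>s. 0 \<le> \<alpha> + 2 * s * \<beta> + s\<^sup>2 * \<gamma>"
  shows "\<beta>\<^sup>2 \<le> \<alpha> * \<gamma>"
proof (cases "\<gamma> = 0")
  case True
  have "\<beta> = 0"
  proof (rule ccontr)
    assume "\<beta> \<noteq> 0"
    then have "\<alpha> + 2 * (- (\<alpha> + 1) / (2 * \<beta>)) * \<beta> = -1" by (simp add: field_simps)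
    then show False using nonneg[of "- (\<alpha> + 1) / (2 * \<beta>)"] True by simp
  qed
  with True show ?thesis by simp
next
  case False
  with assms(1) have "\<gamma> > 0" by simp
  then have "\<alpha> + 2 * (- \<beta> / \<gamma>) * \<beta> + (- \<beta> / \<gamma>)\<^sup>2 * \<gamma> = \<alpha> - \<beta>\<^sup>2 / \<gamma>"
    by (simp add: field_simps power2_eq_square)
  with nonneg[of "- \<beta> / \<gamma>"] have "\<beta>\<^sup>2 / \<gamma> \<le> \<alpha>" by simp
  with \<open>\<gamma> > 0\<close> show ?thesis by (simp add: pos_divide_le_eq mult.commute)
qed

lemma psd_cauchy_schwarz:
  fixes A :: "real mat"
  assumes A: "A \<in> carrier_mat n n" and sym: "transpose_mat A = A"
    and psd: "\<And>z. z \<in> carrier_vec n \<Longrightarrow> 0 \<le> z \<bullet> (A *\<^sub>v z)"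
    and x: "x \<in> carrier_vec n" and y: "y \<in> carrier_vec n"
  shows "(y \<bullet> (A *\<^sub>v x))\<^sup>2 \<le> (x \<bullet> (A *\<^sub>v x)) * (y \<bullet> (A *\<^sub>v y))"
proof (rule discriminant_le_of_quadratic_nonneg)
  show "0 \<le> y \<bullet> (A *\<^sub>v y)" using psd[OF y] .
  fix s :: real
  have "(x + s \<cdot>\<^sub>v y) \<bullet> (A *\<^sub>v (x + s \<cdot>\<^sub>v y))
      = x \<bullet> (A *\<^sub>v x) + s * (y \<bullet> (A *\<^sub>v x)) + s * (x \<bullet> (A *\<^sub>v y)) + s\<^sup>2 * (y \<bullet> (A *\<^sub>v y))"
    using A x y by (simp add: mult_add_distrib_mat_vec[OF A] mult_mat_vec[OF A]
        add_scalar_prod_distrib[of _ n] scalar_prod_add_distrib[of _ n] power2_eq_square algebra_simps)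
  then show "0 \<le> x \<bullet> (A *\<^sub>v x) + 2 * s * (y \<bullet> (A *\<^sub>v x)) + s\<^sup>2 * (y \<bullet> (A *\<^sub>v y))"
    using psd[of "x + s \<cdot>\<^sub>v y"] quadratic_form_symmetric[OF A sym x y] x y by simp
qed

lemma nonsingular_psd_coercive:
  fixes B :: "real mat"
  assumes B: "B \<in> carrier_mat n n" and sym: "transpose_mat B = B"
    and psd: "\<And>z. z \<in> carrier_vec n \<Longrightarrow> 0 \<le> z \<bullet> (B *\<^sub>v z)" and "det B \<noteq> 0"
  obtains \<delta> where "\<delta> > 0" and "\<And>z. z \<in> carrier_vec n \<Longrightarrow> \<delta> * (z \<bullet> z) \<le> z \<bullet> (B *\<^sub>v z)"
proof -
  (* For y = B z we have z . z <= K_C (y . y) with C the inverse of B, and Cauchy-Schwarz for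
     the form of B gives (y . y)^2 = (y . B z)^2 <= (z . B z) (y . B y) <= K_B (y . y) (z . B z). *)
  from det_non_zero_imp_unit[OF B \<open>det B \<noteq> 0\<close>, of "()"]
  obtain C where C: "C \<in> carrier_mat n n" and CB: "C * B = 1\<^sub>m n"
    unfolding Units_def ring_mat_def by auto
  define K\<^sub>B where "K\<^sub>B = (\<Sum>i<n. \<Sum>j<n. \<bar>B $$ (i, j)\<bar>)"
  define K\<^sub>C where "K\<^sub>C = (\<Sum>i<n. \<Sum>j<n. (C $$ (i, j))\<^sup>2)"
  have "K\<^sub>B \<ge> 0" "K\<^sub>C \<ge> 0" unfolding K\<^sub>B_def K\<^sub>C_def by (auto intro!: sum_nonneg)
  then have pos: "K\<^sub>C * K\<^sub>B + 1 > 0" by (simp add: add_nonneg_pos)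
  show thesis
  proof (rule that[of "1 / (K\<^sub>C * K\<^sub>B + 1)"])
    show "1 / (K\<^sub>C * K\<^sub>B + 1) > 0" using pos by simp
    fix z :: "real vec" assume z: "z \<in> carrier_vec n"
    define y where "y = B *\<^sub>v z"
    have y: "y \<in> carrier_vec n" unfolding y_def using B z by simp
    have "z = C *\<^sub>v y" unfolding y_def using C B z CB
      by (metis assoc_mult_mat_vec one_mult_mat_vec)
    then have zz: "z \<bullet> z \<le> K\<^sub>C * (y \<bullet> y)"
      unfolding K\<^sub>C_def using mult_mat_vec_scalar_prod_self_le[OF C y] by simp
    have "(y \<bullet> y)\<^sup>2 \<le> (z \<bullet> (B *\<^sub>v z)) * (y \<bullet> (B *\<^sub>v y))"
      using psd_cauchy_schwarz[OF B sym psd z y] unfolding y_def by simp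
    also have "\<dots> \<le> (z \<bullet> (B *\<^sub>v z)) * (K\<^sub>B * (y \<bullet> y))"
      using abs_quadratic_form_le[OF B y] psd[OF z] unfolding K\<^sub>B_def
      by (intro mult_left_mono) auto
    finally have "y \<bullet> y \<le> K\<^sub>B * (z \<bullet> (B *\<^sub>v z))"
      using scalar_prod_self_nonneg[of y]
      by (cases "y \<bullet> y = 0") (auto simp: power2_eq_square mult_ac psd[OF z] \<open>K\<^sub>B \<ge> 0\<close>)
    with zz have "z \<bullet> z \<le> (K\<^sub>C * K\<^sub>B + 1) * (z \<bullet> (B *\<^sub>v z))"
      using mult_left_mono[OF _ \<open>K\<^sub>C \<ge> 0\<close>] psd[OF z] by (fastforce simp: algebra_simps)
    then show "1 / (K\<^sub>C * K\<^sub>B + 1) * (z \<bullet> z) \<le> z \<bullet> (B *\<^sub>v z)"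
      using pos by (simp add: divide_le_eq mult.commute)
  qed
qed

lemma quadratic_form_greatest_lower_bound:
  fixes A :: "real mat"
  assumes A: "A \<in> carrier_mat n n" and "n > 0"
  obtains t\<^sub>0 where "\<And>z. z \<in> carrier_vec n \<Longrightarrow> t\<^sub>0 * (z \<bullet> z) \<le> z \<bullet> (A *\<^sub>v z)"
    and "\<And>t. (\<And>z. z \<in> carrier_vec n \<Longrightarrow> t * (z \<bullet> z) \<le> z \<bullet> (A *\<^sub>v z)) \<Longrightarrow> t \<le> t\<^sub>0"
proof -
  define T where "T = {t. \<forall>z\<in>carrier_vec n. t * (z \<bullet> z) \<le> z \<bullet> (A *\<^sub>v z)}"
  have "- (\<Sum>i<n. \<Sum>j<n. \<bar>A $$ (i, j)\<bar>) \<in> T"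
    using abs_quadratic_form_le[OF A] unfolding T_def by (force simp: abs_le_iff)
  then have T_ne: "T \<noteq> {}" by auto
  define e :: "real vec" where "e = unit_vec n 0"
  have "e \<in> carrier_vec n" "e \<bullet> e = 1" unfolding e_def using \<open>n > 0\<close> by auto
  then have T_bdd: "bdd_above T" unfolding bdd_above_def T_def by force
  have Sup_lower: "Sup T * (z \<bullet> z) \<le> z \<bullet> (A *\<^sub>v z)" if z: "z \<in> carrier_vec n" for z
  proof (cases "z = 0\<^sub>v n")
    case True
    then show ?thesis using A by simp
  next
    case False
    then have zz: "z \<bullet> z > 0"
      using scalar_prod_self_nonneg[of z] scalar_prod_self_eq_0_iff[OF z] by linarith
    have "Sup T \<le> (z \<bullet> (A *\<^sub>v z)) / (z \<bullet> z)"
      using z zz by (intro cSup_least[OF T_ne]) (auto simp: T_def pos_le_divide_eq)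
    then show ?thesis using zz by (simp add: pos_le_divide_eq)
  qed
  show thesis using that[OF Sup_lower] cSup_upper[OF _ T_bdd] unfolding T_def by blast
qed

lemma finite_eigenvalues:
  fixes A :: "real mat"
  assumes A: "A \<in> carrier_mat n n"
  shows "finite {t. eigenvalue A t}"
proof -
  have "char_poly A \<noteq> 0" using degree_monic_char_poly[OF A] by auto
  then show ?thesis unfolding eigenvalue_root_char_poly[OF A] by (rule poly_roots_finite)
qed

lemma min_eigenvalue_mult_le_quadratic_form:
  fixes A :: "real mat"
  assumes A: "A \<in> carrier_mat n n" and sym: "transpose_mat A = A" and "n > 0"
    and x: "x \<in> carrier_vec n"
  shows "Min {t. eigenvalue A t} * (x \<bullet> x) \<le> x \<bullet> (A *\<^sub>v x)"
proof -
  obtain t\<^sub>0 where lower: "\<And>z. z \<in> carrier_vec n \<Longrightarrow> t\<^sub>0 * (z \<bullet> z) \<le> z \<bullet> (A *\<^sub>v z)"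
    and greatest: "\<And>t. (\<And>z. z \<in> carrier_vec n \<Longrightarrow> t * (z \<bullet> z) \<le> z \<bullet> (A *\<^sub>v z)) \<Longrightarrow> t \<le> t\<^sub>0"
    using quadratic_form_greatest_lower_bound[OF A \<open>n > 0\<close>] by blast
  (* If the best constant t0 were not an eigenvalue, A - t0 I would be nonsingular and positive
     semidefinite, hence coercive, and t0 could be increased. *)
  define B where "B = char_matrix A t\<^sub>0"
  have B: "B \<in> carrier_mat n n" unfolding B_def using A by simp
  have "A $$ (j, i) = A $$ (i, j)" if "i < n" "j < n" for i j
    using sym that A by (metis carrier_matD index_transpose_mat(1))
  then have B_sym: "transpose_mat B = B"
    unfolding B_def char_matrix_def using A by (intro eq_matI) auto
  have B_form: "z \<bullet> (B *\<^sub>v z) = z \<bullet> (A *\<^sub>v z) - t\<^sub>0 * (z \<bullet> z)" if z: "z \<in> carrier_vec n" for z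
  proof -
    have "B *\<^sub>v z = A *\<^sub>v z + (- t\<^sub>0) \<cdot>\<^sub>v z" unfolding B_def char_matrix_def
      using A z by (intro eq_vecI) (auto simp: add_scalar_prod_distrib[of _ n])
    then show ?thesis using A z by (simp add: scalar_prod_add_distrib[of _ n])
  qed
  have "eigenvalue A t\<^sub>0"
  proof (rule ccontr)
    assume "\<not> eigenvalue A t\<^sub>0"
    then have "det B \<noteq> 0" unfolding B_def eigenvalue_det[OF A] by simp
    moreover have "\<And>z. z \<in> carrier_vec n \<Longrightarrow> 0 \<le> z \<bullet> (B *\<^sub>v z)" using lower B_form by simp
    ultimately obtain \<delta> where "\<delta> > 0" and "\<And>z. z \<in> carrier_vec n \<Longrightarrow> \<delta> * (z \<bullet> z) \<le> z \<bullet> (B *\<^sub>v z)"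
      using nonsingular_psd_coercive[OF B B_sym] by blast
    then have "t\<^sub>0 + \<delta> \<le> t\<^sub>0" by (intro greatest) (simp add: B_form algebra_simps)
    with \<open>\<delta> > 0\<close> show False by simp
  qed
  then have "Min {t. eigenvalue A t} \<le> t\<^sub>0" using finite_eigenvalues[OF A] by (intro Min_le) auto
  then have "Min {t. eigenvalue A t} * (x \<bullet> x) \<le> t\<^sub>0 * (x \<bullet> x)"
    using scalar_prod_self_nonneg by (rule mult_right_mono)
  also have "\<dots> \<le> x \<bullet> (A *\<^sub>v x)" using lower[OF x] .
  finally show ?thesis .
qed

section \<open>The least-squares estimate\<close>

lemma Pinv_carrier: "Pinv s u p q n \<in> carrier_mat (p + q) (p + q)"
  unfolding Pinv_def by simp

lemma transpose_Pinv: "transpose_mat (Pinv s u p q n) = Pinv s u p q n"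
  unfolding Pinv_def by (intro eq_matI) (auto simp: mult.commute)

lemma Pinv_quadratic_form:
  assumes z: "z \<in> carrier_vec (p + q)"
  shows "z \<bullet> (Pinv s u p q n *\<^sub>v z) = z \<bullet> z + (\<Sum>i<n. (regr s u p q i \<bullet> z)\<^sup>2)"
proof -
  let ?d = "p + q" and ?r = "\<lambda>i j. regr s u p q i $ j"
  have "z \<bullet> (Pinv s u p q n *\<^sub>v z)
      = (\<Sum>j<?d. \<Sum>k<?d. (if j = k then z $ j * z $ k else 0))
        + (\<Sum>j<?d. \<Sum>k<?d. \<Sum>i<n. (?r i j * z $ j) * (?r i k * z $ k))"
    unfolding quadratic_form_eq_sum[OF Pinv_carrier z z] sum.distrib[symmetric]
    by (intro sum.cong refl) (simp add: Pinv_def algebra_simps sum_distrib_left)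
  also have "(\<Sum>j<?d. \<Sum>k<?d. (if j = k then z $ j * z $ k else 0)) = z \<bullet> z"
    by (simp add: scalar_prod_eq_sum[OF z])
  also have "(\<Sum>j<?d. \<Sum>k<?d. \<Sum>i<n. (?r i j * z $ j) * (?r i k * z $ k))
      = (\<Sum>i<n. \<Sum>j<?d. \<Sum>k<?d. (?r i j * z $ j) * (?r i k * z $ k))"
    by (subst sum.swap) (simp only: sum.swap[of _ "{..<?d}" "{..<n}"])
  also have "\<dots> = (\<Sum>i<n. (regr s u p q i \<bullet> z)\<^sup>2)"
    by (simp add: scalar_prod_eq_sum[OF z] power2_eq_square sum_product mult_ac)
  finally show ?thesis .
qed

lemma Pinv_mult_Pmat:
  "Pinv s u p q n * Pmat s u p q n = 1\<^sub>m (p + q)" and Pmat_carrier: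
  "Pmat s u p q n \<in> carrier_mat (p + q) (p + q)"
proof -
  let ?A = "Pinv s u p q n"
  have "det ?A \<noteq> 0"
  proof
    assume "det ?A = 0"
    then obtain z where z: "z \<in> carrier_vec (p + q)" "z \<noteq> 0\<^sub>v (p + q)" "?A *\<^sub>v z = 0\<^sub>v (p + q)"
      using det_0_iff_vec_prod_zero[OF Pinv_carrier] by auto
    then have "z \<bullet> z + (\<Sum>i<n. (regr s u p q i \<bullet> z)\<^sup>2) = 0"
      using Pinv_quadratic_form[OF z(1), where s = s and u = u and n = n] by simp
    then have "z \<bullet> z = 0"
      using scalar_prod_self_nonneg[of z] sum_nonneg[of "{..<n}" "\<lambda>i. (regr s u p q i \<bullet> z)\<^sup>2"] by simp
    with z show False using scalar_prod_self_eq_0_iff by blast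
  qed
  then have "?A \<in> Units (ring_mat TYPE(real) (p + q) ())"
    by (rule det_non_zero_imp_unit[OF Pinv_carrier])
  then obtain C where "mat_inverse ?A = Some C"
    using mat_inverse(1)[OF Pinv_carrier] by fastforce
  from mat_inverse(2)[OF Pinv_carrier this]
  show "?A * Pmat s u p q n = 1\<^sub>m (p + q)" "Pmat s u p q n \<in> carrier_mat (p + q) (p + q)"
    unfolding Pmat_def \<open>mat_inverse ?A = Some C\<close> by auto
qed

lemma theta_LS_carrier: "theta_LS s u p q n \<in> carrier_vec (p + q)"
  unfolding theta_LS_def by (intro mult_mat_vec_carrier[OF Pmat_carrier]) simp

lemma theta_LS_quadratic_form_le:
  fixes s u :: "nat \<Rightarrow> real"
  shows "theta_LS s u p q n \<bullet> (Pinv s u p q n *\<^sub>v theta_LS s u p q n) \<le> (\<Sum>i<n. (s (Suc i))\<^sup>2)"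
proof -
  let ?\<theta> = "theta_LS s u p q n" and ?A = "Pinv s u p q n"
  define g where "g = vec (p + q) (\<lambda>j. \<Sum>i<n. regr s u p q i $ j * s (Suc i))"
  have g: "g \<in> carrier_vec (p + q)" unfolding g_def by simp
  have \<theta>: "?\<theta> = Pmat s u p q n *\<^sub>v g" unfolding theta_LS_def g_def ..
  have A\<theta>: "?A *\<^sub>v ?\<theta> = g" unfolding \<theta> using g Pinv_carrier Pmat_carrier Pinv_mult_Pmat
    by (metis assoc_mult_mat_vec one_mult_mat_vec)
  have "?\<theta> \<bullet> (?A *\<^sub>v ?\<theta>) = (\<Sum>j<p + q. \<Sum>i<n. ?\<theta> $ j * (regr s u p q i $ j * s (Suc i)))"
    unfolding A\<theta> scalar_prod_eq_sum[OF g] by (simp add: g_def sum_distrib_left)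
  also have "\<dots> = (\<Sum>i<n. (regr s u p q i \<bullet> ?\<theta>) * s (Suc i))"
    unfolding scalar_prod_eq_sum[OF theta_LS_carrier] sum_distrib_right
    by (subst sum.swap) (simp add: mult_ac)
  finally have "?\<theta> \<bullet> (?A *\<^sub>v ?\<theta>) = (\<Sum>i<n. (regr s u p q i \<bullet> ?\<theta>) * s (Suc i))" .
  then have "(?\<theta> \<bullet> (?A *\<^sub>v ?\<theta>))\<^sup>2 \<le> (\<Sum>i<n. (regr s u p q i \<bullet> ?\<theta>)\<^sup>2) * (\<Sum>i<n. (s (Suc i))\<^sup>2)"
    by (simp add: Cauchy_Schwarz_ineq_sum)
  also have "\<dots> \<le> (?\<theta> \<bullet> (?A *\<^sub>v ?\<theta>)) * (\<Sum>i<n. (s (Suc i))\<^sup>2)"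
    using Pinv_quadratic_form[OF theta_LS_carrier] scalar_prod_self_nonneg[of ?\<theta>]
    by (intro mult_right_mono sum_nonneg) auto
  finally have "(?\<theta> \<bullet> (?A *\<^sub>v ?\<theta>))\<^sup>2 \<le> (?\<theta> \<bullet> (?A *\<^sub>v ?\<theta>)) * (\<Sum>i<n. (s (Suc i))\<^sup>2)" .
  moreover have "0 \<le> ?\<theta> \<bullet> (?A *\<^sub>v ?\<theta>)"
    using Pinv_quadratic_form[OF theta_LS_carrier] scalar_prod_self_nonneg[of ?\<theta>]
    by (simp add: sum_nonneg add_nonneg_nonneg)
  ultimately show ?thesis
    by (cases "?\<theta> \<bullet> (?A *\<^sub>v ?\<theta>) = 0") (auto simp: power2_eq_square intro: sum_nonneg)
qed

lemma lambda_min_mult_theta_LS_le: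
  fixes s u :: "nat \<Rightarrow> real"
  assumes "p + q > 0"
  shows "lambda_min s u p q n * (theta_LS s u p q (Suc n) \<bullet> theta_LS s u p q (Suc n))
    \<le> (\<Sum>i<Suc n. (s (Suc i))\<^sup>2)"
  unfolding lambda_min_def
  using min_eigenvalue_mult_le_quadratic_form[OF Pinv_carrier transpose_Pinv assms theta_LS_carrier]
    theta_LS_quadratic_form_le by (rule order_trans)

section \<open>Stable autoregressive filters\<close>

definition ar_fps :: "(nat \<Rightarrow> real) \<Rightarrow> complex fps" where
  "ar_fps a = Abs_fps (\<lambda>i. if i = 0 then 1 else complex_of_real (a i))"

lemma ar_poly_has_fps_expansion:
  fixes a :: "nat \<Rightarrow> real"
  assumes a_zero: "\<And>i. i > p\<^sub>0 \<Longrightarrow> a i = 0"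
  shows "(\<lambda>z. 1 + (\<Sum>i=1..p\<^sub>0. complex_of_real (a i) * z ^ i)) has_fps_expansion ar_fps a"
proof -
  have "1 + (\<Sum>i=1..p\<^sub>0. fps_const (complex_of_real (a i)) * fps_X ^ i) = ar_fps a"
  proof (rule fps_ext)
    fix k
    have "(\<Sum>i=1..p\<^sub>0. fps_const (complex_of_real (a i)) * fps_X ^ i) $ k
        = (\<Sum>i\<in>{1..p\<^sub>0}. if i = k then complex_of_real (a i) else 0)"
      by (simp only: fps_sum_nth) (intro sum.cong refl, simp add: fps_X_power_nth)
    then show "(1 + (\<Sum>i=1..p\<^sub>0. fps_const (complex_of_real (a i)) * fps_X ^ i)) $ k = ar_fps a $ k"
      using a_zero[of k] by (auto simp: ar_fps_def not_le)
  qed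
  moreover have "(\<lambda>z. 1 + (\<Sum>i=1..p\<^sub>0. complex_of_real (a i) * z ^ i)) has_fps_expansion
      1 + (\<Sum>i=1..p\<^sub>0. fps_const (complex_of_real (a i)) * fps_X ^ i)"
    by (intro fps_expansion_intros)
  ultimately show ?thesis by simp
qed

lemma zero_free_cball_extends:
  fixes f :: "'a::{real_normed_vector, heine_borel} \<Rightarrow> 'b::real_normed_vector"
  assumes "continuous_on UNIV f" and nz: "\<And>z. norm z \<le> 1 \<Longrightarrow> f z \<noteq> 0"
  obtains R where "R > 1" and "\<And>z. norm z < R \<Longrightarrow> f z \<noteq> 0"
proof -
  define Z where "Z = {z. f z = 0} \<inter> cball 0 2"
  have "compact Z" unfolding Z_def
    using continuous_closed_preimage_constant[OF assms(1) closed_UNIV]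
    by (intro closed_Int_compact) auto
  show thesis
  proof (cases "Z = {}")
    case True
    then show thesis by (intro that[of 2]) (auto simp: Z_def)
  next
    case False
    then obtain z\<^sub>0 where "z\<^sub>0 \<in> Z" and z\<^sub>0_min: "\<And>z. z \<in> Z \<Longrightarrow> norm z\<^sub>0 \<le> norm z"
      using continuous_attains_inf[OF \<open>compact Z\<close> _ continuous_on_norm_id] by blast
    then have "norm z\<^sub>0 > 1" "norm z\<^sub>0 \<le> 2" using nz by (force simp: Z_def)+
    then show thesis using z\<^sub>0_min by (intro that[of "norm z\<^sub>0"]) (force simp: Z_def)+
  qed
qed

lemma summable_norm_inverse_ar_fps:
  fixes a :: "nat \<Rightarrow> real"
  assumes stable: "\<And>z::complex. norm z \<le> 1 \<Longrightarrow> 1 + (\<Sum>i=1..p\<^sub>0. complex_of_real (a i) * z ^ i) \<noteq> 0"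
    and a_zero: "\<And>i. i > p\<^sub>0 \<Longrightarrow> a i = 0"
  shows "summable (\<lambda>k. norm (inverse (ar_fps a) $ k))"
proof -
  define f where "f z = 1 + (\<Sum>i=1..p\<^sub>0. complex_of_real (a i) * z ^ i)" for z
  have "continuous_on UNIV f" unfolding f_def by (intro continuous_intros)
  then obtain R where "R > 1" and R: "\<And>z. norm z < R \<Longrightarrow> f z \<noteq> 0"
    using zero_free_cball_extends stable[folded f_def] by blast
  have "ar_fps a $ 0 \<noteq> 0" by (simp add: ar_fps_def)
  then have "(\<lambda>z. inverse (f z)) has_fps_expansion inverse (ar_fps a)"
    unfolding f_def by (intro has_fps_expansion_inverse ar_poly_has_fps_expansion a_zero)
  moreover have "(\<lambda>z. inverse (f z)) holomorphic_on eball 0 (ereal R)"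
    using R unfolding f_def by (intro holomorphic_intros) auto
  ultimately have R_le: "ereal R \<le> fps_conv_radius (inverse (ar_fps a))"
    by (rule holomorphic_on_imp_fps_conv_radius_ge)
  have "ereal (norm (1::complex)) < conv_radius (fps_nth (inverse (ar_fps a)))"
    using order.strict_trans2[OF _ R_le] \<open>R > 1\<close> unfolding fps_conv_radius_def by simp
  from abs_summable_in_conv_radius[OF this] show ?thesis by simp
qed

lemma sum_sq_convolution_le:
  fixes h v :: "nat \<Rightarrow> real"
  assumes h_nonneg: "\<And>k. h k \<ge> 0" and h_sum: "\<And>n. (\<Sum>k<n. h k) \<le> L"
  shows "(\<Sum>n<N. (\<Sum>k\<le>n. h k * \<bar>v (n - k)\<bar>)\<^sup>2) \<le> L\<^sup>2 * (\<Sum>n<N. (v n)\<^sup>2)"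
proof -
  have "L \<ge> 0" using h_sum[of 0] by simp
  have "(\<Sum>k\<le>n. h k * \<bar>v (n - k)\<bar>)\<^sup>2 \<le> L * (\<Sum>k\<le>n. h k * (v (n - k))\<^sup>2)" for n
  proof -
    have "(\<Sum>k\<le>n. h k * \<bar>v (n - k)\<bar>)\<^sup>2 = (\<Sum>k\<le>n. sqrt (h k) * (sqrt (h k) * \<bar>v (n - k)\<bar>))\<^sup>2"
      using h_nonneg by (simp add: real_sqrt_mult_self mult.assoc[symmetric])
    also have "\<dots> \<le> (\<Sum>k\<le>n. (sqrt (h k))\<^sup>2) * (\<Sum>k\<le>n. (sqrt (h k) * \<bar>v (n - k)\<bar>)\<^sup>2)"
      by (rule Cauchy_Schwarz_ineq_sum)
    also have "\<dots> = (\<Sum>k\<le>n. h k) * (\<Sum>k\<le>n. h k * (v (n - k))\<^sup>2)"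
      using h_nonneg by (simp add: power_mult_distrib)
    also have "\<dots> \<le> L * (\<Sum>k\<le>n. h k * (v (n - k))\<^sup>2)"
      using h_sum[of "Suc n"] h_nonneg
      by (intro mult_right_mono sum_nonneg) (auto simp: lessThan_Suc_atMost)
    finally show ?thesis .
  qed
  then have "(\<Sum>n<N. (\<Sum>k\<le>n. h k * \<bar>v (n - k)\<bar>)\<^sup>2) \<le> L * (\<Sum>n<N. \<Sum>k\<le>n. h k * (v (n - k))\<^sup>2)"
    by (simp add: sum_mono sum_distrib_left)
  also have "(\<Sum>n<N. \<Sum>k\<le>n. h k * (v (n - k))\<^sup>2) = (\<Sum>(i, j)\<in>{(i, j). i + j < N}. h i * (v j)\<^sup>2)"
    by (rule sum.triangle_reindex[symmetric])
  also have "\<dots> \<le> (\<Sum>(i, j)\<in>{..<N} \<times> {..<N}. h i * (v j)\<^sup>2)"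
    using h_nonneg by (intro sum_mono2) auto
  also have "\<dots> = (\<Sum>i<N. h i) * (\<Sum>j<N. (v j)\<^sup>2)"
    by (simp add: sum_product sum.cartesian_product)
  also have "\<dots> \<le> L * (\<Sum>j<N. (v j)\<^sup>2)"
    using h_sum[of N] by (intro mult_right_mono sum_nonneg) auto
  finally show ?thesis using \<open>L \<ge> 0\<close> by (simp add: mult_left_mono power2_eq_square mult.assoc)
qed

lemma lagged_sum_eq:
  fixes a y :: "nat \<Rightarrow> real"
  assumes a_zero: "\<And>i. i > p\<^sub>0 \<Longrightarrow> a i = 0"
  shows "(\<Sum>i=1..p\<^sub>0. a i * (if i \<le> n then y (n - i) else 0)) = (\<Sum>i=1..n. a i * y (n - i))"
proof -
  define g where "g i = (if i \<le> n then a i * y (n - i) else 0)" for i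
  have "(\<Sum>i=1..p\<^sub>0. a i * (if i \<le> n then y (n - i) else 0)) = (\<Sum>i=1..max n p\<^sub>0. g i)"
    by (intro sum.mono_neutral_cong_left) (auto simp: g_def a_zero)
  also have "\<dots> = (\<Sum>i=1..n. a i * y (n - i))"
    by (intro sum.mono_neutral_cong_right) (auto simp: g_def)
  finally show ?thesis .
qed

lemma ar_output_fps_eq:
  fixes a y v :: "nat \<Rightarrow> real"
  assumes a_zero: "\<And>i. i > p\<^sub>0 \<Longrightarrow> a i = 0"
    and rec: "\<And>n. y n = (\<Sum>i=1..p\<^sub>0. - a i * (if i \<le> n then y (n - i) else 0)) + v n"
  shows "Abs_fps (\<lambda>n. complex_of_real (y n)) = inverse (ar_fps a) * Abs_fps (\<lambda>n. complex_of_real (v n))"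
    (is "?Y = _ * ?V")
proof -
  have "ar_fps a * ?Y = ?V"
  proof (rule fps_ext)
    fix n
    have "y n + (\<Sum>i=1..n. a i * y (n - i)) = v n"
      using rec[of n] lagged_sum_eq[OF a_zero, where y = y and n = n] by (simp add: sum_negf)
    moreover have "(ar_fps a * ?Y) $ n = complex_of_real (y n + (\<Sum>i=1..n. a i * y (n - i)))"
      by (simp add: fps_mult_nth ar_fps_def sum.atLeast_Suc_atMost)
    ultimately show "(ar_fps a * ?Y) $ n = ?V $ n" by simp
  qed
  moreover have "inverse (ar_fps a) * ar_fps a = 1" by (rule inverse_mult_eq_1) (simp add: ar_fps_def)
  ultimately show ?thesis by (metis mult.assoc mult_1)
qed

lemma AR_energy_bound:
  fixes a :: "nat \<Rightarrow> real"
  assumes stable: "\<And>z::complex. norm z \<le> 1 \<Longrightarrow> 1 + (\<Sum>i=1..p\<^sub>0. complex_of_real (a i) * z ^ i) \<noteq> 0"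
    and a_zero: "\<And>i. i > p\<^sub>0 \<Longrightarrow> a i = 0"
  obtains L where "L \<ge> 0" and "\<And>y v :: nat \<Rightarrow> real. \<And>N.
     (\<And>n. y n = (\<Sum>i=1..p\<^sub>0. - a i * (if i \<le> n then y (n - i) else 0)) + v n) \<Longrightarrow>
     (\<Sum>n<N. (y n)\<^sup>2) \<le> L * (\<Sum>n<N. (v n)\<^sup>2)"
proof -
  define H where "H = inverse (ar_fps a)"
  define h where "h k = norm (H $ k)" for k
  have "summable h" unfolding h_def H_def by (rule summable_norm_inverse_ar_fps[OF stable a_zero])
  have h_nonneg: "h k \<ge> 0" for k unfolding h_def by simp
  have h_sum: "(\<Sum>k<n. h k) \<le> suminf h" for n
    using \<open>summable h\<close> h_nonneg by (intro sum_le_suminf) auto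
  show thesis
  proof (rule that[of "(suminf h)\<^sup>2"])
    fix y v :: "nat \<Rightarrow> real" and N
    assume "\<And>n. y n = (\<Sum>i=1..p\<^sub>0. - a i * (if i \<le> n then y (n - i) else 0)) + v n"
    note Y = ar_output_fps_eq[OF a_zero this, folded H_def]
    have y_conv: "\<bar>y n\<bar> \<le> (\<Sum>k\<le>n. h k * \<bar>v (n - k)\<bar>)" for n
    proof -
      have "\<bar>y n\<bar> = norm (\<Sum>k\<le>n. H $ k * complex_of_real (v (n - k)))"
        using arg_cong[OF Y, of "\<lambda>F :: complex fps. norm (F $ n)"] by (simp add: fps_mult_nth atLeast0AtMost)
      also have "\<dots> \<le> (\<Sum>k\<le>n. h k * \<bar>v (n - k)\<bar>)"
        by (rule order_trans[OF norm_sum]) (simp add: h_def norm_mult)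
      finally show ?thesis .
    qed
    have "(\<Sum>n<N. (y n)\<^sup>2) \<le> (\<Sum>n<N. (\<Sum>k\<le>n. h k * \<bar>v (n - k)\<bar>)\<^sup>2)"
      using y_conv by (intro sum_mono) (metis abs_ge_zero power2_abs power_mono)
    also have "\<dots> \<le> (suminf h)\<^sup>2 * (\<Sum>n<N. (v n)\<^sup>2)"
      by (rule sum_sq_convolution_le[OF h_nonneg h_sum])
    finally show "(\<Sum>n<N. (y n)\<^sup>2) \<le> (suminf h)\<^sup>2 * (\<Sum>n<N. (v n)\<^sup>2)" .
  qed simp
qed

section \<open>Gaussian noise and uniform input\<close>

lemma std_normal_density_mult_exp:
  "std_normal_density x * exp (x\<^sup>2 / 4) = sqrt 2 * normal_density 0 (sqrt 2) x"
proof -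
  have "exp (- x\<^sup>2 / 2) * exp (x\<^sup>2 / 4) = exp (- x\<^sup>2 / 4)" by (simp add: exp_add[symmetric])
  moreover have "sqrt (2 * pi * (sqrt 2)\<^sup>2) = sqrt 2 * sqrt (2 * pi)" by (simp add: real_sqrt_mult)
  ultimately show ?thesis unfolding std_normal_density_def normal_density_def by (simp add: field_simps)
qed

context prob_space
begin

lemma std_normal_nn_integral_exp_sq:
  assumes X: "distributed M lborel X (\<lambda>x. ennreal (std_normal_density x))"
  shows "(\<integral>\<^sup>+\<omega>. ennreal (exp ((X \<omega>)\<^sup>2 / 4)) \<partial>M) = ennreal (sqrt 2)"
proof -
  have "(\<integral>\<^sup>+\<omega>. ennreal (exp ((X \<omega>)\<^sup>2 / 4)) \<partial>M)
      = (\<integral>\<^sup>+x. ennreal (std_normal_density x) * ennreal (exp (x\<^sup>2 / 4)) \<partial>lborel)"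
    by (rule distributed_nn_integral[OF X, symmetric]) simp
  also have "\<dots> = (\<integral>\<^sup>+x. ennreal (sqrt 2) * ennreal (normal_density 0 (sqrt 2) x) \<partial>lborel)"
    by (intro nn_integral_cong) (simp add: ennreal_mult'[symmetric] std_normal_density_mult_exp flip: ennreal_mult)
  also have "\<dots> = ennreal (sqrt 2) * (\<integral>\<^sup>+x. ennreal (normal_density 0 (sqrt 2) x) \<partial>lborel)"
    by (rule nn_integral_cmult) simp
  also have "(\<integral>\<^sup>+x. ennreal (normal_density 0 (sqrt 2) x) \<partial>lborel) = 1"
    by (subst nn_integral_eq_integral) auto
  finally show ?thesis by simp
qed

lemma gaussian_energy_tail_le:
  assumes indep: "indep_vars (\<lambda>_. borel) w UNIV"
    and distr: "\<And>n. distributed M lborel (w n) (\<lambda>x. ennreal (std_normal_density x))"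
  shows "measure M {\<omega>\<in>space M. 4 * real N \<le> (\<Sum>n<N. (w n \<omega>)\<^sup>2)} \<le> (sqrt 2 / exp 1) ^ N"
proof -
  have [measurable]: "w n \<in> borel_measurable M" for n
    using distributed_measurable[OF distr[of n]] by simp
  have "emeasure M {\<omega>\<in>space M. 4 * real N \<le> (\<Sum>n<N. (w n \<omega>)\<^sup>2)}
      \<le> ennreal (exp (- (1/4) * (4 * real N)))
        * (\<integral>\<^sup>+\<omega>\<in>space M. ennreal (exp ((1/4) * (\<Sum>n<N. (w n \<omega>)\<^sup>2))) \<partial>M)"
    by (intro Chernoff_ineq_nn_integral_ge) auto
  also have "(\<integral>\<^sup>+\<omega>\<in>space M. ennreal (exp ((1/4) * (\<Sum>n<N. (w n \<omega>)\<^sup>2))) \<partial>M)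
      = (\<integral>\<^sup>+\<omega>. (\<Prod>n<N. ennreal (exp ((w n \<omega>)\<^sup>2 / 4))) \<partial>M)"
    by (intro nn_integral_cong) (simp add: sum_distrib_left exp_sum prod_ennreal)
  also have "\<dots> = (\<Prod>n<N. \<integral>\<^sup>+\<omega>. ennreal (exp ((w n \<omega>)\<^sup>2 / 4)) \<partial>M)"
    by (intro indep_vars_nn_integral indep_vars_compose2[OF indep_vars_subset[OF indep]]) auto
  also have "\<dots> = (\<Prod>n<N. ennreal (sqrt 2))" by (simp add: std_normal_nn_integral_exp_sq[OF distr])
  also have "\<dots> = ennreal (sqrt 2 ^ N)" by (simp add: prod_ennreal ennreal_power)
  also have "ennreal (exp (- (1/4) * (4 * real N))) * ennreal (sqrt 2 ^ N) = ennreal ((sqrt 2 / exp 1) ^ N)"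
    by (simp add: ennreal_mult'[symmetric] power_divide exp_of_nat_mult[symmetric] exp_minus field_simps
        flip: ennreal_mult)
  finally show ?thesis by (simp add: emeasure_eq_measure ennreal_le_iff)
qed

lemma AE_eventually_gaussian_energy_less:
  assumes indep: "indep_vars (\<lambda>_. borel) w UNIV"
    and distr: "\<And>n. distributed M lborel (w n) (\<lambda>x. ennreal (std_normal_density x))"
  shows "AE \<omega> in M. \<forall>\<^sub>F N in sequentially. (\<Sum>n<N. (w n \<omega>)\<^sup>2) < 4 * real N"
proof -
  have [measurable]: "w n \<in> borel_measurable M" for n
    using distributed_measurable[OF distr[of n]] by simp
  define A where "A N = {\<omega>\<in>space M. 4 * real N \<le> (\<Sum>n<N. (w n \<omega>)\<^sup>2)}" for N
  have A_sets: "A N \<in> sets M" for N unfolding A_def by measurable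
  have "sqrt 2 < 2" using real_sqrt_less_mono[of 2 4] by simp
  also have "2 \<le> exp (1::real)" using exp_ge_add_one_self[of 1] by simp
  finally have "sqrt 2 / exp 1 < 1" by simp
  then have "summable (\<lambda>N. measure M (A N))"
    using gaussian_energy_tail_le[OF indep distr] unfolding A_def
    by (intro summable_comparison_test[OF _ summable_geometric]) auto
  from borel_cantelli_AE1[OF A_sets _ this]
  have "AE \<omega> in M. \<forall>\<^sub>F N in sequentially. \<omega> \<in> space M - A N"
    by (simp add: emeasure_eq_measure)
  then show ?thesis unfolding A_def by (auto elim!: eventually_mono simp: not_le)
qed

lemma AE_uniform_bounded:
  fixes u :: "nat \<Rightarrow> 'a \<Rightarrow> real"
  assumes distr: "\<And>n. distributed M lborel (u n) (\<lambda>x. ennreal (indicator {-\<delta>..\<delta>} x / (2 * \<delta>)))"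
  shows "AE \<omega> in M. \<forall>n. \<bar>u n \<omega>\<bar> \<le> \<delta>"
proof -
  have bounded: "AE \<omega> in M. \<bar>u n \<omega>\<bar> \<le> \<delta>" for n
  proof (rule AE_I')
    have "emeasure M (u n -` (- {-\<delta>..\<delta>}) \<inter> space M)
        = (\<integral>\<^sup>+x\<in>(- {-\<delta>..\<delta>}). ennreal (indicator {-\<delta>..\<delta>} x / (2 * \<delta>)) \<partial>lborel)"
      by (rule distributed_emeasure[OF distr]) simp
    also have "\<dots> = 0" by (intro nn_integral_zero') (auto split: split_indicator)
    finally show "u n -` (- {-\<delta>..\<delta>}) \<inter> space M \<in> null_sets M"
      using distributed_measurable[OF distr[of n]] by (auto simp: null_sets_def)
  qed auto
  show ?thesis by (rule AE_all_countable[THEN iffD2]) (intro allI bounded)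
qed

end

section \<open>The quantized ARX system\<close>

lemma abs_quant_diff_le:
  assumes "eps > 0"
  shows "\<bar>quant eps x - x\<bar> \<le> eps / 2"
proof -
  define f where "f = real_of_int \<lfloor>x / eps + 1/2\<rfloor>"
  have "x / eps + 1/2 = (x + eps / 2) / eps" using assms by (simp add: field_simps)
  moreover have "f \<le> x / eps + 1/2" "x / eps + 1/2 < f + 1" unfolding f_def by linarith+
  ultimately have "f * eps \<le> x + eps / 2" "x + eps / 2 < (f + 1) * eps"
    using assms by (simp_all add: pos_le_divide_eq pos_divide_less_eq)
  then show ?thesis unfolding quant_def f_def[symmetric] abs_le_iff by (auto simp: algebra_simps)
qed

lemma quant_energy_le:
  assumes "eps > 0"
  shows "(\<Sum>n<N. (quant eps (y n))\<^sup>2) \<le> 2 * (\<Sum>n<N. (y n)\<^sup>2) + real N * eps\<^sup>2 / 2"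
proof -
  have "(quant eps x)\<^sup>2 \<le> 2 * x\<^sup>2 + eps\<^sup>2 / 2" for x
  proof -
    have "(quant eps x - x)\<^sup>2 \<le> (eps / 2)\<^sup>2"
      using abs_quant_diff_le[OF assms, of x] by (metis abs_ge_zero power2_abs power_mono)
    then show ?thesis using square_add_le[of x "quant eps x - x"] by (simp add: power_divide)
  qed
  then have "(\<Sum>n<N. (quant eps (y n))\<^sup>2) \<le> (\<Sum>n<N. 2 * (y n)\<^sup>2 + eps\<^sup>2 / 2)"
    by (intro sum_mono)
  then show ?thesis by (simp add: sum.distrib sum_distrib_left)
qed

lemma abs_lagged_sum_le:
  fixes b u :: "nat \<Rightarrow> real"
  assumes "\<And>j. \<bar>b j\<bar> \<le> c" and "\<And>n. \<bar>u n\<bar> \<le> \<delta>"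
  shows "\<bar>\<Sum>j=1..q. b j * (if j \<le> n then u (n - j) else 0)\<bar> \<le> real q * c * \<delta>"
proof -
  have "\<bar>b j * (if j \<le> n then u (n - j) else 0)\<bar> \<le> c * \<delta>" for j
    unfolding abs_mult using assms(1)[of j] assms(2)[of "n - j"] assms(2)[of 0] by (intro mult_mono) auto
  then have "\<bar>\<Sum>j=1..q. b j * (if j \<le> n then u (n - j) else 0)\<bar> \<le> (\<Sum>j=1..q. c * \<delta>)"
    by (intro order_trans[OF sum_abs sum_mono])
  then show ?thesis by simp
qed

lemma sum_sq_bounded_add_le:
  fixes x w :: "nat \<Rightarrow> real"
  assumes "\<And>n. \<bar>x n\<bar> \<le> B"
  shows "(\<Sum>n<N. (x n + w n)\<^sup>2) \<le> (2 * B\<^sup>2 + 2) * (real N + (\<Sum>n<N. (w n)\<^sup>2))"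
proof -
  have "(x n + w n)\<^sup>2 \<le> 2 * B\<^sup>2 + 2 * (w n)\<^sup>2" for n
    using square_add_le[of "x n" "w n"] power_mono[OF assms abs_ge_zero, of n 2] by simp
  then have "(\<Sum>n<N. (x n + w n)\<^sup>2) \<le> (\<Sum>n<N. 2 * B\<^sup>2 + 2 * (w n)\<^sup>2)"
    by (rule sum_mono)
  also have "\<dots> = 2 * B\<^sup>2 * real N + 2 * (\<Sum>n<N. (w n)\<^sup>2)"
    by (simp add: sum.distrib sum_distrib_left)
  also have "\<dots> \<le> (2 * B\<^sup>2 + 2) * (real N + (\<Sum>n<N. (w n)\<^sup>2))"
    using zero_le_mult_iff[of "B\<^sup>2" "\<Sum>n<N. (w n)\<^sup>2"] by (simp add: ring_distribs sum_nonneg)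
  finally show ?thesis .
qed

lemma ARX_energy_bound:
  fixes a b :: "nat \<Rightarrow> real"
  assumes stable: "\<And>z::complex. norm z \<le> 1 \<Longrightarrow> 1 + (\<Sum>i=1..p\<^sub>0. complex_of_real (a i) * z ^ i) \<noteq> 0"
    and a_zero: "\<And>i. i > p\<^sub>0 \<Longrightarrow> a i = 0" and b_bound: "\<And>j. \<bar>b j\<bar> \<le> c"
  obtains K where "K \<ge> 0" and "\<And>y u w :: nat \<Rightarrow> real. \<And>N.
     (\<And>n. y n = (\<Sum>i=1..p\<^sub>0. - a i * (if i \<le> n then y (n - i) else 0))
        + (\<Sum>j=1..q\<^sub>0. b j * (if j \<le> n then u (n - j) else 0)) + w n) \<Longrightarrow>
     (\<And>n. \<bar>u n\<bar> \<le> \<delta>) \<Longrightarrow>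
     (\<Sum>n<N. (y n)\<^sup>2) \<le> K * (real N + (\<Sum>n<N. (w n)\<^sup>2))"
proof -
  obtain L where "L \<ge> 0" and L: "\<And>y v :: nat \<Rightarrow> real. \<And>N.
     (\<And>n. y n = (\<Sum>i=1..p\<^sub>0. - a i * (if i \<le> n then y (n - i) else 0)) + v n) \<Longrightarrow>
     (\<Sum>n<N. (y n)\<^sup>2) \<le> L * (\<Sum>n<N. (v n)\<^sup>2)"
    using AR_energy_bound[OF stable a_zero] by blast
  show thesis
  proof (rule that[of "L * (2 * (real q\<^sub>0 * c * \<delta>)\<^sup>2 + 2)"])
    show "L * (2 * (real q\<^sub>0 * c * \<delta>)\<^sup>2 + 2) \<ge> 0" using \<open>L \<ge> 0\<close> by simp
    fix y u w :: "nat \<Rightarrow> real" and N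
    assume rec: "\<And>n. y n = (\<Sum>i=1..p\<^sub>0. - a i * (if i \<le> n then y (n - i) else 0))
        + (\<Sum>j=1..q\<^sub>0. b j * (if j \<le> n then u (n - j) else 0)) + w n"
      and u_bound: "\<And>n. \<bar>u n\<bar> \<le> \<delta>"
    define x where "x n = (\<Sum>j=1..q\<^sub>0. b j * (if j \<le> n then u (n - j) else 0))" for n
    have "(\<Sum>n<N. (y n)\<^sup>2) \<le> L * (\<Sum>n<N. (x n + w n)\<^sup>2)"
    proof (rule L)
      show "y n = (\<Sum>i=1..p\<^sub>0. - a i * (if i \<le> n then y (n - i) else 0)) + (x n + w n)" for n
        using rec[of n] unfolding x_def by linarith
    qed
    also have "\<dots> \<le> L * ((2 * (real q\<^sub>0 * c * \<delta>)\<^sup>2 + 2) * (real N + (\<Sum>n<N. (w n)\<^sup>2)))"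
      unfolding x_def using \<open>L \<ge> 0\<close>
      by (intro mult_left_mono sum_sq_bounded_add_le abs_lagged_sum_le b_bound u_bound)
    finally show "(\<Sum>n<N. (y n)\<^sup>2) \<le> L * (2 * (real q\<^sub>0 * c * \<delta>)\<^sup>2 + 2) * (real N + (\<Sum>n<N. (w n)\<^sup>2))"
      by (simp add: mult.assoc)
  qed
qed

lemma theta_hat_index_sq_le:
  fixes s u :: "nat \<Rightarrow> real"
  assumes "p \<le> p\<^sub>0" "k < p\<^sub>0 + q"
  shows "(theta_hat s u p\<^sub>0 p q n $ k)\<^sup>2 \<le> theta_LS s u p q n \<bullet> theta_LS s u p q n"
proof -
  have \<theta>: "theta_LS s u p q n \<in> carrier_vec (p + q)" by (rule theta_LS_carrier)
  consider "k < p" | "p \<le> k" "k < p\<^sub>0" | "p\<^sub>0 \<le> k" by linarith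
  then show ?thesis
  proof cases
    case 1
    then show ?thesis using assms square_index_le_scalar_prod_self[OF \<theta>, of k] by (simp add: theta_hat_def)
  next
    case 2
    then show ?thesis using assms scalar_prod_self_nonneg by (simp add: theta_hat_def)
  next
    case 3
    then show ?thesis using assms square_index_le_scalar_prod_self[OF \<theta>, of "k - p\<^sub>0 + p"]
      by (simp add: theta_hat_def)
  qed
qed

lemma enorm_diff_theta_hat_le:
  fixes s u :: "nat \<Rightarrow> real"
  assumes "p \<le> p\<^sub>0"
  shows "enorm (theta_bar a b p\<^sub>0 q - theta_hat s u p\<^sub>0 p q n)
    \<le> sqrt (2 * (\<Sum>k<p\<^sub>0 + q. (theta_bar a b p\<^sub>0 q $ k)\<^sup>2)
             + 2 * real (p\<^sub>0 + q) * (theta_LS s u p q n \<bullet> theta_LS s u p q n))"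
proof -
  let ?b = "theta_bar a b p\<^sub>0 q" and ?h = "theta_hat s u p\<^sub>0 p q n" and ?\<theta> = "theta_LS s u p q n"
  have dims: "dim_vec ?h = p\<^sub>0 + q" "dim_vec ?b = p\<^sub>0 + q" by (simp_all add: theta_hat_def theta_bar_def)
  have "(\<Sum>k<p\<^sub>0 + q. ((?b - ?h) $ k)\<^sup>2) \<le> (\<Sum>k<p\<^sub>0 + q. 2 * (?b $ k)\<^sup>2 + 2 * (?\<theta> \<bullet> ?\<theta>))"
  proof (intro sum_mono)
    fix k assume k: "k \<in> {..<p\<^sub>0 + q}"
    then have "(?b - ?h) $ k = ?b $ k + (- ?h $ k)" using dims by simp
    then have "((?b - ?h) $ k)\<^sup>2 \<le> 2 * (?b $ k)\<^sup>2 + 2 * (?h $ k)\<^sup>2"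
      using square_add_le[of "?b $ k" "- ?h $ k"] by simp
    moreover have "(?h $ k)\<^sup>2 \<le> ?\<theta> \<bullet> ?\<theta>" using k by (intro theta_hat_index_sq_le assms) simp
    ultimately show "((?b - ?h) $ k)\<^sup>2 \<le> 2 * (?b $ k)\<^sup>2 + 2 * (?\<theta> \<bullet> ?\<theta>)" by linarith
  qed
  also have "\<dots> = 2 * (\<Sum>k<p\<^sub>0 + q. (?b $ k)\<^sup>2) + 2 * real (p\<^sub>0 + q) * (?\<theta> \<bullet> ?\<theta>)"
    by (simp add: sum.distrib sum_distrib_left)
  finally show ?thesis unfolding enorm_def using dims by (simp del: of_nat_add add: real_sqrt_le_mono)
qed

lemma theta_LS_eventually_bounded:
  fixes s u :: "nat \<Rightarrow> real"
  assumes energy: "\<forall>\<^sub>F n in sequentially. (\<Sum>i<Suc n. (s (Suc i))\<^sup>2) \<le> C * (real n + 1)"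
    and PE: "\<forall>\<^sub>F n in sequentially. c\<^sub>1 * (real n + 1) \<le> lambda_min s u p q n"
    and "c\<^sub>1 > 0" "p + q > 0"
  shows "\<forall>\<^sub>F n in sequentially. theta_LS s u p q n \<bullet> theta_LS s u p q n \<le> C / c\<^sub>1"
proof -
  let ?\<theta> = "theta_LS s u p q"
  have "\<forall>\<^sub>F n in sequentially. ?\<theta> (Suc n) \<bullet> ?\<theta> (Suc n) \<le> C / c\<^sub>1"
    using energy PE
  proof eventually_elim
    case (elim n)
    have "c\<^sub>1 * (real n + 1) * (?\<theta> (Suc n) \<bullet> ?\<theta> (Suc n)) \<le> C * (real n + 1)"
      using mult_right_mono[OF elim(2) scalar_prod_self_nonneg[of "?\<theta> (Suc n)"]]
        lambda_min_mult_theta_LS_le[OF \<open>p + q > 0\<close>, of s u n] elim(1) by linarith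
    then show ?case using \<open>c\<^sub>1 > 0\<close> by (simp add: pos_le_divide_eq mult_ac)
  qed
  then show ?thesis by (rule eventually_sequentially_Suc[THEN iffD1])
qed

lemma quantized_energy_eventually_le:
  fixes y w :: "nat \<Rightarrow> real"
  assumes energy: "\<And>N. (\<Sum>n<N. (y n)\<^sup>2) \<le> K * (real N + (\<Sum>n<N. (w n)\<^sup>2))" and "K \<ge> 0"
    and noise: "\<forall>\<^sub>F N in sequentially. (\<Sum>n<N. (w n)\<^sup>2) < 4 * real N" and "eps > 0"
  shows "\<forall>\<^sub>F n in sequentially. (\<Sum>i<Suc n. (quant eps (y (Suc i)))\<^sup>2) \<le> (20 * K + eps\<^sup>2) * (real n + 1)"
proof -
  have "\<forall>\<^sub>F n in sequentially. (\<Sum>k<Suc (Suc n). (w k)\<^sup>2) < 4 * real (Suc (Suc n))"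
    using noise by (intro eventually_sequentially_Suc[THEN iffD2])+
  then show ?thesis
  proof eventually_elim
    case (elim n)
    let ?N = "real (Suc (Suc n))"
    have "(\<Sum>i<Suc n. (quant eps (y (Suc i)))\<^sup>2) \<le> (\<Sum>i<Suc (Suc n). (quant eps (y i))\<^sup>2)"
      unfolding sum.lessThan_Suc_shift[of _ "Suc n"] by simp
    also have "\<dots> \<le> 2 * (K * (?N + (\<Sum>k<Suc (Suc n). (w k)\<^sup>2))) + ?N * eps\<^sup>2 / 2"
      using quant_energy_le[OF \<open>eps > 0\<close>, where N = "Suc (Suc n)" and y = y] energy[of "Suc (Suc n)"]
      by linarith
    also have "\<dots> \<le> 2 * (K * (?N + 4 * ?N)) + ?N * eps\<^sup>2 / 2"
      using elim \<open>K \<ge> 0\<close> by (intro add_right_mono mult_left_mono add_left_mono) auto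
    also have "\<dots> = (10 * K + eps\<^sup>2 / 2) * ?N" by (simp add: algebra_simps)
    also have "\<dots> \<le> (10 * K + eps\<^sup>2 / 2) * (2 * (real n + 1))"
      using \<open>K \<ge> 0\<close> by (intro mult_left_mono) auto
    also have "\<dots> = (20 * K + eps\<^sup>2) * (real n + 1)" by (simp add: algebra_simps)
    finally show ?case .
  qed
qed

lemma padded_LS_error_eventually_bounded:
  fixes y u w :: "nat \<Rightarrow> real"
  assumes energy: "\<And>N. (\<Sum>n<N. (y n)\<^sup>2) \<le> K * (real N + (\<Sum>n<N. (w n)\<^sup>2))" and "K \<ge> 0"
    and noise: "\<forall>\<^sub>F N in sequentially. (\<Sum>n<N. (w n)\<^sup>2) < 4 * real N"
    and PE: "\<forall>\<^sub>F n in sequentially. c\<^sub>1 * (real n + 1) \<le> lambda_min (\<lambda>i. quant eps (y i)) u p q n"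
    and "c\<^sub>1 > 0" "eps > 0" "p \<le> p\<^sub>0" "q > 0"
  shows "\<forall>\<^sub>F n in sequentially.
    enorm (theta_bar a b p\<^sub>0 q - theta_hat (\<lambda>i. quant eps (y i)) u p\<^sub>0 p q n)
      \<le> sqrt (2 * (\<Sum>k<p\<^sub>0 + q. (theta_bar a b p\<^sub>0 q $ k)\<^sup>2) + 2 * real (p\<^sub>0 + q) * ((20 * K + eps\<^sup>2) / c\<^sub>1))"
  using theta_LS_eventually_bounded[OF quantized_energy_eventually_le[OF energy \<open>K \<ge> 0\<close> noise \<open>eps > 0\<close>]
      PE \<open>c\<^sub>1 > 0\<close> trans_less_add2[OF \<open>q > 0\<close>]]
proof eventually_elim
  case (elim n)
  show ?case
    by (rule order_trans[OF enorm_diff_theta_hat_le[OF \<open>p \<le> p\<^sub>0\<close>]])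
      (use elim in \<open>intro real_sqrt_le_mono add_left_mono mult_left_mono, auto\<close>)
qed

theorem lemma3:
  fixes M :: "'w measure"
    and a b :: "nat \<Rightarrow> real" and p0 q0 pstar qstar p :: nat
    and w u y :: "nat \<Rightarrow> 'w \<Rightarrow> real"
    and eps delta c :: real
  assumes prob: "prob_space M"
    (* noise i.i.d. N(0,1) *)
    and w_indep: "prob_space.indep_vars M (\<lambda>_. borel) w UNIV"
    and w_distr: "\<And>n. distributed M lborel (w n) (\<lambda>x. ennreal (std_normal_density x))"
    (* (A1) input i.i.d. uniform on [-delta, delta] *)
    and delta_pos: "delta > 0"
    and u_indep: "prob_space.indep_vars M (\<lambda>_. borel) u UNIV"
    and u_distr: "\<And>n. distributed M lborel (u n)
                     (\<lambda>x. ennreal (indicator {-delta..delta} x / (2 * delta)))"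
    (* system: y_n = -a_1 y_{n-1} - ... + b_1 u_{n-1} + ... + w_n, zero initial conditions *)
    and sys: "\<And>n \<omega>. y n \<omega> =
        (\<Sum>i=1..p0. - a i * (if i \<le> n then y (n - i) \<omega> else 0))
      + (\<Sum>j=1..q0. b j * (if j \<le> n then u (n - j) \<omega> else 0)) + w n \<omega>"
    and a_zero: "\<And>i. i > p0 \<Longrightarrow> a i = 0"
    and b_zero: "\<And>j. j > q0 \<Longrightarrow> b j = 0"
    and q0_pos: "q0 \<ge> 1"
    and a_lead: "p0 > 0 \<Longrightarrow> a p0 \<noteq> 0"
    and b_lead: "b q0 \<noteq> 0"
    (* (A2) stability *)
    and stable: "\<And>z::complex. norm z \<le> 1 \<Longrightarrow>
                   1 + (\<Sum>i=1..p0. complex_of_real (a i) * z ^ i) \<noteq> 0"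
    (* (A3) *)
    and c_pos: "c > 0"
    and a_bound: "\<And>i. \<bar>a i\<bar> \<le> c" and b_bound: "\<And>j. \<bar>b j\<bar> \<le> c"
    and eps_pos: "eps > 0"
    and eps_small: "eps < 1 / (2 * (1 + real p0 * c))"
    (* (A4) *)
    and pstar_pos: "pstar > 0" and qstar_pos: "qstar > 0"
    and p0_le: "p0 \<le> pstar" and q0_le: "q0 \<le> qstar"
    (* (A5) *)
    and PE: "\<exists>c1>0. \<forall>p'\<le>pstar. AE \<omega> in M. \<forall>\<^sub>F n in sequentially.
               lambda_min (\<lambda>i. quant eps (y i \<omega>)) (\<lambda>i. u i \<omega>) p' qstar n \<ge> c1 * (real n + 1)"
    and p_le: "p \<le> p0"
  shows "\<exists>\<gamma>. AE \<omega> in M. \<forall>\<^sub>F n in sequentially.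
           enorm (theta_bar a b p0 qstar
                  - theta_hat (\<lambda>i. quant eps (y i \<omega>)) (\<lambda>i. u i \<omega>) p0 p qstar n) \<le> \<gamma>"
proof -
  interpret prob_space M by (rule prob)
  from PE obtain c\<^sub>1 where "c\<^sub>1 > 0" and PE_all: "\<forall>p'\<le>pstar. AE \<omega> in M. \<forall>\<^sub>F n in sequentially.
      lambda_min (\<lambda>i. quant eps (y i \<omega>)) (\<lambda>i. u i \<omega>) p' qstar n \<ge> c\<^sub>1 * (real n + 1)"
    by blast
  obtain K where "K \<ge> 0" and energy: "\<And>y u w :: nat \<Rightarrow> real. \<And>N.
     (\<And>n. y n = (\<Sum>i=1..p0. - a i * (if i \<le> n then y (n - i) else 0))
        + (\<Sum>j=1..q0. b j * (if j \<le> n then u (n - j) else 0)) + w n) \<Longrightarrow>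
     (\<And>n. \<bar>u n\<bar> \<le> delta) \<Longrightarrow> (\<Sum>n<N. (y n)\<^sup>2) \<le> K * (real N + (\<Sum>n<N. (w n)\<^sup>2))"
    using ARX_energy_bound[where b = b and \<delta> = delta and q\<^sub>0 = q0, OF stable a_zero b_bound] by blast
  have "AE \<omega> in M. \<forall>n. \<bar>u n \<omega>\<bar> \<le> delta" by (rule AE_uniform_bounded[OF u_distr])
  moreover have "AE \<omega> in M. \<forall>\<^sub>F N in sequentially. (\<Sum>n<N. (w n \<omega>)\<^sup>2) < 4 * real N"
    by (rule AE_eventually_gaussian_energy_less[OF w_indep w_distr])
  ultimately have "AE \<omega> in M. \<forall>\<^sub>F n in sequentially.
      enorm (theta_bar a b p0 qstar - theta_hat (\<lambda>i. quant eps (y i \<omega>)) (\<lambda>i. u i \<omega>) p0 p qstar n)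
        \<le> sqrt (2 * (\<Sum>k<p0 + qstar. (theta_bar a b p0 qstar $ k)\<^sup>2)
                 + 2 * real (p0 + qstar) * ((20 * K + eps\<^sup>2) / c\<^sub>1))"
    using PE_all[rule_format, OF order_trans[OF p_le p0_le]]
  proof eventually_elim
    case (elim \<omega>)
    have "(\<Sum>n<N. (y n \<omega>)\<^sup>2) \<le> K * (real N + (\<Sum>n<N. (w n \<omega>)\<^sup>2))" for N
      using elim(1) by (intro energy[OF sys[where \<omega> = \<omega>]]) simp
    then show ?case
      by (rule padded_LS_error_eventually_bounded[OF _ \<open>K \<ge> 0\<close> elim(2,3) \<open>c\<^sub>1 > 0\<close> eps_pos p_le qstar_pos])
  qed
  then show ?thesis by blast
qed

end
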